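(* Let $g:\mathbb{R}^m\to\overline{\mathbb{R}}$ be a polyhedral function and $(\bar z,\bar\lambda)\in\mathrm{gph}\,\partial g$. Then its strict second subderivative is $${\rm d}_s^2 g(\bar z,\bar\lambda)(w)=\delta_{K_g(\bar z,\bar\lambda)-K_g(\bar z,\bar\lambda)}(w)\quad\text{for all } w\in\mathbb{R}^m.$$
   Context: A proper function $g:\mathbb{R}^m\to\overline{\mathbb{R}}$ is polyhedral if its epigraph is a polyhedral convex set; $\partial g$ is the convex-analysis subdifferential; $\delta_C$ is the indicator function of $C$. For $z$ with $g(z)$ finite, ${\rm d} g(z)(w)=\liminf_{t\searrow 0,\,w'\to w}\frac{g(z+tw')-g(z)}{t}$ and for $\lambda\in\partial g(z)$ the critical cone is $K_g(z,\lambda)=\{w\mid\langle\lambda,w\rangle={\rm d} g(z)(w)\}$. For $f:\mathbb{R}^n\to\overline{\mathbb{R}}$, $f(x)$ finite, $v\in\partial f(x)$ and $t>0$, the second-order difference quotient is $\Delta_t^2 f(x,v)(w)=\frac{f(x+tw)-f(x)-t\langle v,w\rangle}{\frac12 t^2}$. The strict second subderivative at $\bar x$ for $\bar v\in\partial f(\bar x)$ is ${\rm d}_s^2 f(\bar x,\bar v)(w)=\liminf \Delta_t^2 f(x,v)(w')$, the liminf taken as $t\searrow0$, $w'\to w$, $(x,v)\to(\bar x,\bar v)$ with $(x,v)\in\mathrm{gph}\,\partial f$ and $f(x)\to f(\bar x)$. *)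

theory Defs
  imports "HOL-Analysis.Analysis" "HOL-Library.Extended_Real"
begin

definition proper_fun :: "('a \<Rightarrow> ereal) \<Rightarrow> bool" where
  "proper_fun g \<longleftrightarrow> (\<forall>x. g x \<noteq> -\<infinity>) \<and> (\<exists>x. g x \<noteq> \<infinity>)"

definition epigraph :: "('a \<Rightarrow> ereal) \<Rightarrow> ('a \<times> real) set" where
  "epigraph g = {(x, t). g x \<le> ereal t}"

definition polyhedral_fun :: "('a::euclidean_space \<Rightarrow> ereal) \<Rightarrow> bool" where
  "polyhedral_fun g \<longleftrightarrow> proper_fun g \<and> polyhedron (epigraph g)"

definition subdiff :: "('a::real_inner \<Rightarrow> ereal) \<Rightarrow> 'a \<Rightarrow> 'a set" where
  "subdiff g x = {v. \<bar>g x\<bar> \<noteq> \<infinity> \<and> (\<forall>y. g y \<ge> g x + ereal (v \<bullet> (y - x)))}"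

definition gph_subdiff :: "('a::real_inner \<Rightarrow> ereal) \<Rightarrow> ('a \<times> 'a) set" where
  "gph_subdiff g = {(x, v). v \<in> subdiff g x}"

definition indicator_fun :: "'a set \<Rightarrow> 'a \<Rightarrow> ereal" where
  "indicator_fun C w = (if w \<in> C then 0 else \<infinity>)"

definition subderiv :: "('a::real_normed_vector \<Rightarrow> ereal) \<Rightarrow> 'a \<Rightarrow> 'a \<Rightarrow> ereal" where
  "subderiv g z w = Liminf (at_right (0::real) \<times>\<^sub>F nhds w)
      (\<lambda>(t, w'). (g (z + t *\<^sub>R w') - g z) / ereal t)"

definition critical_cone :: "('a::real_inner \<Rightarrow> ereal) \<Rightarrow> 'a \<Rightarrow> 'a \<Rightarrow> 'a set" where
  "critical_cone g z lam = {w. ereal (lam \<bullet> w) = subderiv g z w}"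

definition second_diff_quot :: "('a::real_inner \<Rightarrow> ereal) \<Rightarrow> 'a \<Rightarrow> 'a \<Rightarrow> real \<Rightarrow> 'a \<Rightarrow> ereal" where
  "second_diff_quot f x v t w = (f (x + t *\<^sub>R w) - f x - ereal (t * (v \<bullet> w))) / ereal (t\<^sup>2 / 2)"

definition attentive_filter :: "('a::real_inner \<Rightarrow> ereal) \<Rightarrow> 'a \<Rightarrow> 'a \<Rightarrow> ('a \<times> 'a) filter" where
  "attentive_filter f xb vb = inf (inf (nhds (xb, vb)) (principal (gph_subdiff f)))
       (filtercomap (\<lambda>(x, v). f x) (nhds (f xb)))"

definition strict_second_subderiv :: "('a::real_inner \<Rightarrow> ereal) \<Rightarrow> 'a \<Rightarrow> 'a \<Rightarrow> 'a \<Rightarrow> ereal" where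
  "strict_second_subderiv f xb vb w =
     Liminf ((at_right (0::real) \<times>\<^sub>F nhds w) \<times>\<^sub>F attentive_filter f xb vb)
       (\<lambda>((t, w'), (x, v)). second_diff_quot f x v t w')"

end

(*
  Near zb the polyhedral function g agrees with g zb + <lb, h> + phi h, where phi is the
  maximum of finitely many linear forms on a polyhedral cone T and +infinity off T.
  Since lb is a subgradient, phi >= 0, and the critical cone is the polyhedral cone
  K = {phi = 0}.

  If w = w1 - w2 with w1, w2 in K, the graph points (zb + s w2, lb) converge attentively
  to (zb, lb), and g is affine on the segment from zb + s w2 to zb + s (w1 + w2) / 2, so
  second-order quotients vanish along them; the quotients are never negative.

  If w is not in K - K, pick e with <e, w> = 1 and e orthogonal to K; Farkas' lemma gives
  sigma > 0 with sigma <e, .> <= phi on T.  For graph points (zb + u, lb + mu) near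
  (zb, lb), mu is a subgradient of phi at u, and because phi has only finitely many faces
  a small mu forces u into K.  The quotient at (zb + u, lb + mu) in a direction w' near w
  is then at least sigma / (2 t), which blows up as t tends to 0.
*)
theory Submission
  imports Defs
begin

section \<open>Polar cones and maxima of finitely many linear forms\<close>

definition max_inner :: "'a::real_inner set \<Rightarrow> 'a \<Rightarrow> real" where
  "max_inner C h = Max ((\<lambda>c. c \<bullet> h) ` C)"

definition polar_cone :: "'a::real_inner set \<Rightarrow> 'a set" where
  "polar_cone D = {h. \<forall>d\<in>D. d \<bullet> h \<le> 0}"

definition polyhedral_sublinear :: "'a::real_inner set \<Rightarrow> 'a set \<Rightarrow> 'a \<Rightarrow> ereal" where
  "polyhedral_sublinear C D h = (if h \<in> polar_cone D then ereal (max_inner C h) else \<infinity>)"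

lemma max_inner_upper: "finite C \<Longrightarrow> c \<in> C \<Longrightarrow> c \<bullet> h \<le> max_inner C h"
  unfolding max_inner_def by simp

lemma max_inner_attained:
  assumes "finite C" "C \<noteq> {}"
  obtains c where "c \<in> C" "max_inner C h = c \<bullet> h"
proof -
  have "max_inner C h \<in> (\<lambda>c. c \<bullet> h) ` C"
    unfolding max_inner_def using assms by (intro Max_in) auto
  then show ?thesis using that by blast
qed

lemma max_inner_le_iff: "finite C \<Longrightarrow> C \<noteq> {} \<Longrightarrow> max_inner C h \<le> a \<longleftrightarrow> (\<forall>c\<in>C. c \<bullet> h \<le> a)"
  unfolding max_inner_def by simp

lemma max_inner_scaleR:
  assumes "finite C" "C \<noteq> {}" "0 \<le> s"
  shows "max_inner C (s *\<^sub>R h) = s * max_inner C h"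
proof (rule antisym)
  obtain c where "c \<in> C" "max_inner C (s *\<^sub>R h) = c \<bullet> (s *\<^sub>R h)"
    using max_inner_attained assms by blast
  then show "max_inner C (s *\<^sub>R h) \<le> s * max_inner C h"
    using max_inner_upper[OF assms(1)] assms(3) by (simp add: mult_left_mono)
next
  obtain c where "c \<in> C" "max_inner C h = c \<bullet> h"
    using max_inner_attained assms by blast
  then show "s * max_inner C h \<le> max_inner C (s *\<^sub>R h)"
    using max_inner_upper[OF assms(1), of c "s *\<^sub>R h"] by simp
qed

lemma max_inner_translate:
  assumes "finite C" "C \<noteq> {}"
  shows "max_inner ((\<lambda>c. c - l) ` C) h = max_inner C h - l \<bullet> h"
proof -
  have "(\<lambda>c. c \<bullet> h) ` (\<lambda>c. c - l) ` C = (\<lambda>c. c \<bullet> h + - (l \<bullet> h)) ` C"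
    by (simp add: image_image inner_diff_left)
  then show ?thesis
    unfolding max_inner_def using Max_add_commute[OF assms, of "\<lambda>c. c \<bullet> h" "- (l \<bullet> h)"] by simp
qed

lemma convex_cone_polar_cone: "convex_cone (polar_cone G)"
  unfolding convex_cone_iff polar_cone_def
  by (auto simp: inner_add_right add_nonpos_nonpos mult_nonneg_nonpos)

lemma scaleR_mem_polar_cone_iff: "0 < s \<Longrightarrow> s *\<^sub>R h \<in> polar_cone D \<longleftrightarrow> h \<in> polar_cone D"
  unfolding polar_cone_def by (simp add: mult_le_0_iff)

lemma mem_polar_cone_Un:
  "finite C \<Longrightarrow> C \<noteq> {} \<Longrightarrow> h \<in> polar_cone (C \<union> D) \<longleftrightarrow> h \<in> polar_cone D \<and> max_inner C h \<le> 0"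
  unfolding polar_cone_def by (auto simp: max_inner_le_iff)

lemma polyhedral_sublinear_scaleR:
  "finite C \<Longrightarrow> C \<noteq> {} \<Longrightarrow> 0 < s \<Longrightarrow>
    polyhedral_sublinear C D (s *\<^sub>R h) = ereal s * polyhedral_sublinear C D h"
  unfolding polyhedral_sublinear_def by (simp add: scaleR_mem_polar_cone_iff max_inner_scaleR)

lemma polyhedral_sublinear_lsc:
  assumes "finite C" "C \<noteq> {}" "y < ereal (l \<bullet> w) + polyhedral_sublinear C D w"
  shows "\<forall>\<^sub>F w' in nhds w. y < ereal (l \<bullet> w') + polyhedral_sublinear C D w'"
proof (cases "w \<in> polar_cone D")
  case True
  obtain c where c: "c \<in> C" "max_inner C w = c \<bullet> w"
    using max_inner_attained assms(1,2) by blast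
  have "((\<lambda>w'. l \<bullet> w' + c \<bullet> w') \<longlongrightarrow> l \<bullet> w + c \<bullet> w) (nhds w)"
    by (intro tendsto_intros filterlim_ident)
  moreover have "y < ereal (l \<bullet> w + c \<bullet> w)"
    using assms(3) True c unfolding polyhedral_sublinear_def by simp
  ultimately have "\<forall>\<^sub>F w' in nhds w. y < ereal (l \<bullet> w' + c \<bullet> w')"
    by (cases y) (auto dest: order_tendstoD(1))
  then show ?thesis
  proof (rule eventually_mono)
    fix w' assume "y < ereal (l \<bullet> w' + c \<bullet> w')"
    also have "\<dots> \<le> ereal (l \<bullet> w') + polyhedral_sublinear C D w'"
      using max_inner_upper[OF assms(1) c(1), of w'] unfolding polyhedral_sublinear_def by simp
    finally show "y < ereal (l \<bullet> w') + polyhedral_sublinear C D w'" .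
  qed
next
  case False
  then obtain d where "d \<in> D" "0 < d \<bullet> w"
    unfolding polar_cone_def by (auto simp: not_le)
  moreover have "((\<lambda>w'. d \<bullet> w') \<longlongrightarrow> d \<bullet> w) (nhds w)"
    by (intro tendsto_intros filterlim_ident)
  ultimately have "\<forall>\<^sub>F w' in nhds w. 0 < d \<bullet> w'"
    by (auto dest: order_tendstoD(1))
  moreover have "y \<noteq> \<infinity>"
    using assms(3) by auto
  ultimately show ?thesis
    by (elim eventually_mono) (use \<open>d \<in> D\<close> in \<open>auto simp: polyhedral_sublinear_def polar_cone_def\<close>)
qed

lemma subspace_differences_convex_cone:
  assumes "convex_cone K"
  shows "subspace {a - b | a b. a \<in> K \<and> b \<in> K}"
  unfolding subspace_def
proof (intro conjI ballI allI)
  show "0 \<in> {a - b | a b. a \<in> K \<and> b \<in> K}"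
    using assms by (force simp: convex_cone_iff)
next
  fix x y assume "x \<in> {a - b | a b. a \<in> K \<and> b \<in> K}" "y \<in> {a - b | a b. a \<in> K \<and> b \<in> K}"
  then obtain a b a' b' where "x = a - b" "y = a' - b'" and K: "a \<in> K" "b \<in> K" "a' \<in> K" "b' \<in> K"
    by blast
  then have "x + y = (a + a') - (b + b')"
    by simp
  with K show "x + y \<in> {a - b | a b. a \<in> K \<and> b \<in> K}"
    using assms by (blast intro: convex_cone_add)
next
  fix c :: real and x assume "x \<in> {a - b | a b. a \<in> K \<and> b \<in> K}"
  then obtain a b where ab: "x = a - b" "a \<in> K" "b \<in> K"
    by blast
  show "c *\<^sub>R x \<in> {a - b | a b. a \<in> K \<and> b \<in> K}"
  proof (cases "0 \<le> c")
    case True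
    then show ?thesis
      using ab assms by (auto simp: scaleR_diff_right intro: convex_cone_scaleR)
  next
    case False
    then have "(- c) *\<^sub>R a \<in> K" "(- c) *\<^sub>R b \<in> K"
      using ab assms by (auto intro!: convex_cone_scaleR simp del: scaleR_minus_left)
    moreover have "c *\<^sub>R x = (- c) *\<^sub>R b - (- c) *\<^sub>R a"
      unfolding ab(1) by (simp add: algebra_simps)
    ultimately show ?thesis
      by blast
  qed
qed

lemma normal_vanishing_on_convex_cone:
  fixes K :: "'a::euclidean_space set"
  assumes "convex_cone K" "w \<notin> {a - b | a b. a \<in> K \<and> b \<in> K}"
  obtains e where "e \<bullet> w = 1" "\<forall>k\<in>K. e \<bullet> k = 0"
proof -
  have "K \<subseteq> {a - b | a b. a \<in> K \<and> b \<in> K}"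
    using assms(1) by (force simp: convex_cone_iff)
  then have "span K \<subseteq> {a - b | a b. a \<in> K \<and> b \<in> K}"
    using assms(1) by (intro span_minimal subspace_differences_convex_cone)
  then have "w \<notin> span K"
    using assms(2) by blast
  then have "span K \<subset> span (insert w K)"
    by (metis insertI1 psubsetI span_base span_mono subset_insertI)
  then obtain x where x: "x \<noteq> 0" "x \<in> span (insert w K)" "\<And>y. y \<in> span K \<Longrightarrow> orthogonal x y"
    using orthogonal_to_subspace_exists_gen by blast
  have "x \<bullet> w \<noteq> 0"
  proof
    assume "x \<bullet> w = 0"
    then have "orthogonal x y" if "y \<in> insert w K" for y
      using that x(3) span_base by (auto simp: orthogonal_def)
    then have "orthogonal x x"
      using x(2) orthogonal_to_span by blast
    then show False
      using x(1) by (simp add: orthogonal_def)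
  qed
  then show thesis
    using x(3) span_base by (intro that[of "(1 / (x \<bullet> w)) *\<^sub>R x"]) (auto simp: orthogonal_def)
qed

lemma farkas_polar_cone:
  fixes G :: "'a::euclidean_space set"
  assumes "finite G" "\<forall>k\<in>polar_cone G. e \<bullet> k \<le> 0"
  shows "e \<in> convex_cone hull G"
proof (rule ccontr)
  assume "e \<notin> convex_cone hull G"
  moreover have "closed (convex_cone hull G)"
    using assms(1) by (rule closed_convex_cone_hull)
  ultimately obtain a b where ab: "a \<bullet> e < b" "\<forall>x\<in>convex_cone hull G. b < a \<bullet> x"
    using separating_hyperplane_closed_point[OF convex_convex_cone_hull] by blast
  have "b < 0"
    using ab(2) convex_cone_hull_contains_0 by force
  have "0 \<le> a \<bullet> s" if "s \<in> G" for s
  proof (rule ccontr)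
    assume "\<not> 0 \<le> a \<bullet> s"
    then have "(b / (a \<bullet> s)) *\<^sub>R s \<in> convex_cone hull G"
      using \<open>b < 0\<close> that by (intro convex_cone_hull_mul hull_inc) (auto simp: divide_nonpos_neg)
    then show False
      using ab(2) \<open>\<not> 0 \<le> a \<bullet> s\<close> by fastforce
  qed
  then have "- a \<in> polar_cone G"
    unfolding polar_cone_def by (simp add: inner_commute)
  then show False
    using assms(2) ab(1) \<open>b < 0\<close> by (fastforce simp: inner_commute)
qed

lemma convex_cone_hull_le_max_inner:
  fixes C D :: "'a::euclidean_space set"
  assumes "finite C" "C \<noteq> {}" "\<forall>h\<in>polar_cone D. 0 \<le> max_inner C h" "e \<in> convex_cone hull (C \<union> D)"
  obtains \<alpha> where "0 \<le> \<alpha>" "\<forall>y\<in>polar_cone D. e \<bullet> y \<le> \<alpha> * max_inner C y"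
proof -
  define P where "P = {x. \<exists>\<alpha>\<ge>0. \<forall>y\<in>polar_cone D. x \<bullet> y \<le> \<alpha> * max_inner C y}"
  have "C \<union> D \<subseteq> P"
  proof
    fix s assume "s \<in> C \<union> D"
    then have "\<forall>y\<in>polar_cone D. s \<bullet> y \<le> 1 * max_inner C y"
      using max_inner_upper[OF assms(1)] assms(3) unfolding polar_cone_def by fastforce
    then show "s \<in> P"
      unfolding P_def by (blast intro: zero_le_one)
  qed
  moreover have "convex_cone P"
    unfolding convex_cone_iff
  proof (intro conjI ballI allI impI)
    show "0 \<in> P"
      unfolding P_def using assms(3) by auto
  next
    fix x y assume "x \<in> P" "y \<in> P"
    then obtain \<alpha> \<beta> where "0 \<le> \<alpha>" "\<forall>z\<in>polar_cone D. x \<bullet> z \<le> \<alpha> * max_inner C z"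
      "0 \<le> \<beta>" "\<forall>z\<in>polar_cone D. y \<bullet> z \<le> \<beta> * max_inner C z"
      unfolding P_def by blast
    then show "x + y \<in> P"
      unfolding P_def by (intro CollectI exI[of _ "\<alpha> + \<beta>"]) (auto simp: inner_add_left distrib_right intro: add_mono)
  next
    fix x and c :: real assume "x \<in> P" "0 \<le> c"
    then obtain \<alpha> where "0 \<le> \<alpha>" "\<forall>z\<in>polar_cone D. x \<bullet> z \<le> \<alpha> * max_inner C z"
      unfolding P_def by blast
    then show "c *\<^sub>R x \<in> P"
      unfolding P_def using \<open>0 \<le> c\<close>
      by (intro CollectI exI[of _ "c * \<alpha>"]) (auto simp: mult.assoc intro: mult_left_mono)
  qed
  ultimately have "convex_cone hull (C \<union> D) \<subseteq> P"
    by (rule hull_minimal)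
  then show thesis
    using assms(4) that unfolding P_def by blast
qed

lemma max_inner_dominates_inner:
  fixes C D :: "'a::euclidean_space set"
  assumes "finite C" "C \<noteq> {}" "finite D" "\<forall>h\<in>polar_cone D. 0 \<le> max_inner C h"
    and "\<forall>k\<in>polar_cone (C \<union> D). e \<bullet> k \<le> 0"
  obtains \<sigma> where "0 < \<sigma>" "\<forall>y\<in>polar_cone D. \<sigma> * (e \<bullet> y) \<le> max_inner C y"
proof -
  have "e \<in> convex_cone hull (C \<union> D)"
    using assms(1,3,5) by (intro farkas_polar_cone) auto
  then obtain \<alpha> where \<alpha>: "0 \<le> \<alpha>" "\<forall>y\<in>polar_cone D. e \<bullet> y \<le> \<alpha> * max_inner C y"
    using convex_cone_hull_le_max_inner[OF assms(1,2,4)] by blast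
  have "1 / (\<alpha> + 1) * (e \<bullet> y) \<le> max_inner C y" if "y \<in> polar_cone D" for y
  proof -
    have "e \<bullet> y \<le> (\<alpha> + 1) * max_inner C y"
      using \<alpha>(2) assms(4) that by (smt (verit) mult_right_mono)
    then show ?thesis
      using \<alpha>(1) by (simp add: field_simps)
  qed
  then show thesis
    using \<alpha>(1) by (intro that[of "1 / (\<alpha> + 1)"]) auto
qed

section \<open>Polyhedral functions as maxima of affine functions\<close>

definition max_affine_on :: "('a::real_inner \<times> real) set \<Rightarrow> ('a \<times> real) set \<Rightarrow> 'a \<Rightarrow> ereal" where
  "max_affine_on A B x =
     (if \<forall>(p, b)\<in>B. p \<bullet> x \<le> b then ereal (Max ((\<lambda>(c, \<gamma>). c \<bullet> x + \<gamma>) ` A)) else \<infinity>)"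

lemma Max_image_eq_Max_subset:
  assumes "finite A" "I \<subseteq> A" "I \<noteq> {}" "\<And>z. z \<in> A \<Longrightarrow> \<exists>i\<in>I. f z \<le> f i"
  shows "Max (f ` A) = Max (f ` I)"
proof (rule antisym)
  have "finite I"
    using assms(1,2) by (rule finite_subset[rotated])
  show "Max (f ` A) \<le> Max (f ` I)"
  proof (rule Max.boundedI)
    show "finite (f ` A)" "f ` A \<noteq> {}"
      using assms(1-3) by auto
    fix a assume "a \<in> f ` A"
    then obtain z i where "i \<in> I" "a \<le> f i"
      using assms(4) by blast
    then show "a \<le> Max (f ` I)"
      using \<open>finite I\<close> by (auto intro: Max_ge order_trans)
  qed
  show "Max (f ` I) \<le> Max (f ` A)"
    using assms by (intro Max_mono) auto
qed

lemma max_affine_on_le_ereal_iff: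
  "finite A \<Longrightarrow> A \<noteq> {} \<Longrightarrow> max_affine_on A B x \<le> ereal t \<longleftrightarrow>
     (\<forall>(p, b)\<in>B. p \<bullet> x \<le> b) \<and> (\<forall>(c, \<gamma>)\<in>A. c \<bullet> x + \<gamma> \<le> t)"
  unfolding max_affine_on_def by (auto simp: Max_le_iff)

lemma max_affine_on_eq_active_part:
  fixes A B :: "('a::real_inner \<times> real) set"
  assumes A: "finite A" and I: "I \<subseteq> A" "i0 \<in> I" "\<forall>(c, \<gamma>)\<in>I. c \<bullet> y + \<gamma> = m"
    and inactive_A: "\<forall>z\<in>A - I. (fst z - fst i0) \<bullet> x < snd i0 - snd z"
    and S: "S \<subseteq> B" "\<forall>(p, b)\<in>S. p \<bullet> y = b" and inactive_B: "\<forall>z\<in>B - S. fst z \<bullet> x < snd z"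
  shows "max_affine_on A B x = ereal m + polyhedral_sublinear (fst ` I) (fst ` S) (x - y)"
proof -
  have "\<forall>(p, b)\<in>B - S. p \<bullet> x \<le> b"
    using inactive_B by (auto simp: split_beta less_imp_le)
  then have "(\<forall>(p, b)\<in>B. p \<bullet> x \<le> b) \<longleftrightarrow> (\<forall>(p, b)\<in>S. p \<bullet> x \<le> b)"
    using S(1) by fast
  also have "\<dots> \<longleftrightarrow> x - y \<in> polar_cone (fst ` S)"
    using S(2) unfolding polar_cone_def by (fastforce simp: inner_diff_right)
  finally have dom: "(\<forall>(p, b)\<in>B. p \<bullet> x \<le> b) \<longleftrightarrow> x - y \<in> polar_cone (fst ` S)" .
  have "finite I"
    using A I(1) by (rule rev_finite_subset)
  have "\<exists>i\<in>I. fst z \<bullet> x + snd z \<le> fst i \<bullet> x + snd i" if "z \<in> A" for z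
  proof (cases "z \<in> I")
    case False
    then have "(fst z - fst i0) \<bullet> x < snd i0 - snd z"
      using that inactive_A by blast
    then show ?thesis
      using I(2) by (intro bexI[of _ i0]) (auto simp: inner_diff_left)
  qed auto
  then have "Max ((\<lambda>(c, \<gamma>). c \<bullet> x + \<gamma>) ` A) = Max ((\<lambda>(c, \<gamma>). c \<bullet> x + \<gamma>) ` I)"
    using A I(1,2) by (intro Max_image_eq_Max_subset) (auto simp: split_beta)
  also have "(\<lambda>(c, \<gamma>). c \<bullet> x + \<gamma>) ` I = (\<lambda>c. c \<bullet> (x - y) + m) ` fst ` I"
    unfolding image_image using I(3) by (intro image_cong) (auto simp: inner_diff_right)
  also have "Max \<dots> = max_inner (fst ` I) (x - y) + m"
    unfolding max_inner_def using \<open>finite I\<close> I(2) by (intro Max_add_commute) auto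
  finally show ?thesis
    using dom unfolding max_affine_on_def polyhedral_sublinear_def by simp
qed

lemma eventually_nhds_zero_inner_less:
  fixes c y :: "'a::real_inner"
  assumes "c \<bullet> y < b"
  shows "\<forall>\<^sub>F h in nhds 0. c \<bullet> (y + h) < b"
proof -
  have "((\<lambda>h. c \<bullet> (y + h)) \<longlongrightarrow> c \<bullet> (y + 0)) (nhds 0)"
    by (intro tendsto_intros filterlim_ident)
  then show ?thesis
    using assms by (auto dest: order_tendstoD(2))
qed

lemma max_affine_on_local:
  fixes A B :: "('a::real_inner \<times> real) set"
  assumes A: "finite A" "A \<noteq> {}" and B: "finite B" and y: "\<forall>(p, b)\<in>B. p \<bullet> y \<le> b"
  defines "m \<equiv> Max ((\<lambda>(c, \<gamma>). c \<bullet> y + \<gamma>) ` A)"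
  shows "max_affine_on A B y = ereal m"
    and "\<forall>\<^sub>F h in nhds 0. max_affine_on A B (y + h) =
      ereal m + polyhedral_sublinear (fst ` {(c, \<gamma>)\<in>A. c \<bullet> y + \<gamma> = m}) (fst ` {(p, b)\<in>B. p \<bullet> y = b}) h"
proof -
  define I where "I = {(c, \<gamma>)\<in>A. c \<bullet> y + \<gamma> = m}"
  define S where "S = {(p, b)\<in>B. p \<bullet> y = b}"
  show "max_affine_on A B y = ereal m"
    using y unfolding max_affine_on_def m_def by simp
  have "m \<in> (\<lambda>(c, \<gamma>). c \<bullet> y + \<gamma>) ` A"
    unfolding m_def using A by (intro Max_in) auto
  then obtain i0 where i0: "i0 \<in> I"
    unfolding I_def by auto
  have "\<forall>z\<in>A - I. (fst z - fst i0) \<bullet> y < snd i0 - snd z"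
  proof
    fix z assume "z \<in> A - I"
    then have "fst z \<bullet> y + snd z \<le> m" "fst z \<bullet> y + snd z \<noteq> m"
      unfolding m_def I_def using A(1) by (auto simp: split_beta)
    moreover have "fst i0 \<bullet> y + snd i0 = m"
      using i0 unfolding I_def by auto
    ultimately show "(fst z - fst i0) \<bullet> y < snd i0 - snd z"
      by (simp add: inner_diff_left)
  qed
  moreover have "\<forall>z\<in>B - S. fst z \<bullet> y < snd z"
    using y unfolding S_def by (auto simp: order.strict_iff_order)
  ultimately have "\<forall>\<^sub>F h in nhds 0. (\<forall>z\<in>A - I. (fst z - fst i0) \<bullet> (y + h) < snd i0 - snd z) \<and>
      (\<forall>z\<in>B - S. fst z \<bullet> (y + h) < snd z)"
    using A B by (intro eventually_conj eventually_ball_finite ballI eventually_nhds_zero_inner_less) auto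
  moreover have IS: "I \<subseteq> A" "\<forall>(c, \<gamma>)\<in>I. c \<bullet> y + \<gamma> = m" "S \<subseteq> B" "\<forall>(p, b)\<in>S. p \<bullet> y = b"
    unfolding I_def S_def by auto
  ultimately show "\<forall>\<^sub>F h in nhds 0. max_affine_on A B (y + h) = ereal m + polyhedral_sublinear (fst ` I) (fst ` S) h"
  proof (elim eventually_mono conjE)
    fix h
    assume "\<forall>z\<in>A - I. (fst z - fst i0) \<bullet> (y + h) < snd i0 - snd z" "\<forall>z\<in>B - S. fst z \<bullet> (y + h) < snd z"
    then have "max_affine_on A B (y + h) = ereal m + polyhedral_sublinear (fst ` I) (fst ` S) (y + h - y)"
      using A(1) IS i0 by (intro max_affine_on_eq_active_part)
    then show "max_affine_on A B (y + h) = ereal m + polyhedral_sublinear (fst ` I) (fst ` S) h"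
      by simp
  qed
qed

lemma polyhedral_sublinear_local:
  assumes "finite C" "C \<noteq> {}" "finite D" "u \<in> polar_cone D"
  shows "\<forall>\<^sub>F h in nhds 0. polyhedral_sublinear C D (u + h) =
    ereal (max_inner C u) + polyhedral_sublinear {c\<in>C. c \<bullet> u = max_inner C u} {d\<in>D. d \<bullet> u = 0} h"
proof -
  define A where "A = (\<lambda>c. (c, 0::real)) ` C"
  define B where "B = (\<lambda>d. (d, 0::real)) ` D"
  have fun_eq: "polyhedral_sublinear C D x = max_affine_on A B x" for x
  proof -
    have "(\<forall>(p, b)\<in>B. p \<bullet> x \<le> b) \<longleftrightarrow> x \<in> polar_cone D"
      unfolding B_def polar_cone_def by auto
    moreover have "(\<lambda>(c, \<gamma>). c \<bullet> x + \<gamma>) ` A = (\<lambda>c. c \<bullet> x) ` C"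
      unfolding A_def by (simp add: image_image)
    ultimately show ?thesis
      unfolding max_affine_on_def polyhedral_sublinear_def max_inner_def by simp
  qed
  have max_eq: "Max ((\<lambda>(c, \<gamma>). c \<bullet> u + \<gamma>) ` A) = max_inner C u"
    unfolding A_def max_inner_def by (simp add: image_image)
  have active_eq: "fst ` {(c, \<gamma>)\<in>A. c \<bullet> u + \<gamma> = max_inner C u} = {c\<in>C. c \<bullet> u = max_inner C u}"
    "fst ` {(p, b)\<in>B. p \<bullet> u = b} = {d\<in>D. d \<bullet> u = 0}"
    unfolding A_def B_def by force+
  have "\<forall>(p, b)\<in>B. p \<bullet> u \<le> b"
    using assms(4) unfolding B_def polar_cone_def by auto
  moreover have "finite A" "A \<noteq> {}" "finite B"
    unfolding A_def B_def using assms(1-3) by auto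
  ultimately show ?thesis
    using max_affine_on_local(2)[of A B u] unfolding fun_eq max_eq active_eq by blast
qed

lemma polyhedron_halfspaces:
  assumes "polyhedron S"
  obtains P where "finite P" "S = {x. \<forall>(a, b)\<in>P. a \<bullet> x \<le> b}"
proof -
  obtain F where F: "finite F" "S = \<Inter>F" "\<forall>h\<in>F. \<exists>a b. a \<noteq> 0 \<and> h = {x. a \<bullet> x \<le> b}"
    using assms unfolding polyhedron_def by blast
  then have "\<forall>h\<in>F. \<exists>ab. h = {x. fst ab \<bullet> x \<le> snd ab}"
    by fastforce
  then obtain ab where "\<forall>h\<in>F. h = {x. fst (ab h) \<bullet> x \<le> snd (ab h)}"
    by (metis bchoice)
  then have "S = {x. \<forall>(a, b)\<in>ab ` F. a \<bullet> x \<le> b}"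
    using F(2) by (auto simp: split_beta)
  then show thesis
    using that F(1) by blast
qed

lemma halfspace_le_iff_neg_slope:
  fixes p :: "'a::real_inner"
  assumes "q < 0"
  shows "p \<bullet> x + q * t \<le> b \<longleftrightarrow> (- (1 / q)) *\<^sub>R p \<bullet> x + b / q \<le> t"
proof -
  have "p \<bullet> x + q * t \<le> b \<longleftrightarrow> (b - p \<bullet> x) / q \<le> t"
    using assms by (simp add: neg_divide_le_eq algebra_simps)
  also have "(b - p \<bullet> x) / q = (- (1 / q)) *\<^sub>R p \<bullet> x + b / q"
    by (simp add: diff_divide_distrib)
  finally show ?thesis .
qed

lemma epigraph_halfspace_slope_nonpos:
  fixes g :: "'a::real_inner \<Rightarrow> ereal"
  assumes epi: "\<And>x t. g x \<le> ereal t \<longleftrightarrow> (\<forall>((p, q), b)\<in>P. p \<bullet> x + q * t \<le> b)"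
    and x0: "g x0 = ereal t0" and "((p, q), b) \<in> P"
  shows "q \<le> 0"
proof (rule ccontr)
  assume "\<not> q \<le> 0"
  define t where "t = max t0 ((b - p \<bullet> x0) / q + 1)"
  have "p \<bullet> x0 + q * t \<le> b"
    using epi[of x0 t] x0 assms(3) unfolding t_def by auto
  moreover have "(b - p \<bullet> x0) / q + 1 \<le> t"
    unfolding t_def by simp
  ultimately show False
    using \<open>\<not> q \<le> 0\<close> by (simp add: field_simps)
qed

lemma polyhedral_fun_eq_max_affine_on:
  fixes g :: "'a::euclidean_space \<Rightarrow> ereal"
  assumes "polyhedral_fun g"
  obtains A B where "finite A" "A \<noteq> {}" "finite B" "g = max_affine_on A B"
proof -
  have proper: "proper_fun g" and "polyhedron (epigraph g)"
    using assms unfolding polyhedral_fun_def by auto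
  from this(2) obtain P where "finite P" and P: "epigraph g = {z. \<forall>(a, b)\<in>P. a \<bullet> z \<le> b}"
    by (rule polyhedron_halfspaces)
  have epi: "g x \<le> ereal t \<longleftrightarrow> (\<forall>((p, q), b)\<in>P. p \<bullet> x + q * t \<le> b)" for x t
    using P[THEN eqset_imp_iff, of "(x, t)"] unfolding epigraph_def by (auto simp: split_beta)
  obtain x0 t0 where x0: "g x0 = ereal t0"
    using proper unfolding proper_fun_def by (metis ereal_cases)
  define A where "A = (\<lambda>((p, q), b). ((- (1 / q)) *\<^sub>R p, b / q)) ` {z\<in>P. snd (fst z) < 0}"
  define B where "B = (\<lambda>((p, q), b). (p, b)) ` {z\<in>P. snd (fst z) = 0}"
  have epi': "g x \<le> ereal t \<longleftrightarrow> (\<forall>(p, b)\<in>B. p \<bullet> x \<le> b) \<and> (\<forall>(c, \<gamma>)\<in>A. c \<bullet> x + \<gamma> \<le> t)" for x t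
  proof -
    have "((p, q), b) \<in> P \<Longrightarrow> p \<bullet> x + q * t \<le> b \<longleftrightarrow>
        (q = 0 \<longrightarrow> p \<bullet> x \<le> b) \<and> (q < 0 \<longrightarrow> (- (1 / q)) *\<^sub>R p \<bullet> x + b / q \<le> t)" for p q b
      using epigraph_halfspace_slope_nonpos[OF epi x0, of p q b] halfspace_le_iff_neg_slope[of q p x t b] by (cases "q = 0") auto
    then show ?thesis
      unfolding epi A_def B_def by (fastforce simp: split_beta)
  qed
  have "A \<noteq> {}"
  proof
    assume "A = {}"
    then have "g x0 \<le> ereal (t0 - 1)"
      using epi'[of x0 t0] epi'[of x0 "t0 - 1"] x0 by simp
    then show False
      using x0 by simp
  qed
  moreover have "finite A" "finite B"
    unfolding A_def B_def using \<open>finite P\<close> by (intro finite_imageI; simp)+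
  moreover have "g x = max_affine_on A B x" for x
  proof -
    have "g x \<le> ereal t \<longleftrightarrow> max_affine_on A B x \<le> ereal t" for t
      using epi' max_affine_on_le_ereal_iff[OF \<open>finite A\<close> \<open>A \<noteq> {}\<close>] by simp
    then show ?thesis
      by (metis antisym ereal_le_real)
  qed
  ultimately show thesis
    using that by blast
qed

section \<open>Subgradients of polyhedral sublinear functions\<close>

lemma eventually_scaleR_mem_open:
  fixes u :: "'a::real_normed_vector"
  assumes "open U" "s0 *\<^sub>R u \<in> U"
  shows "\<forall>\<^sub>F s in at s0 within S. s *\<^sub>R u \<in> U"
proof -
  have "((\<lambda>s. s *\<^sub>R u) \<longlongrightarrow> s0 *\<^sub>R u) (at s0 within S)"
    by (intro tendsto_intros)
  then show ?thesis
    using assms by (rule topological_tendstoD)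
qed

lemma max_inner_local_subgradient_global:
  fixes C D :: "'a::real_inner set"
  assumes C: "finite C" "C \<noteq> {}" and U: "open U" "0 \<in> U" "u \<in> U" and u: "u \<in> polar_cone D"
    and local: "\<And>h. h \<in> U \<Longrightarrow> h \<in> polar_cone D \<Longrightarrow> max_inner C u + \<mu> \<bullet> (h - u) \<le> max_inner C h"
  shows "\<forall>h\<in>polar_cone D. max_inner C u + \<mu> \<bullet> (h - u) \<le> max_inner C h"
proof
  have along_ray: "(s - 1) * (\<mu> \<bullet> u) \<le> (s - 1) * max_inner C u" if "0 < s" "s *\<^sub>R u \<in> U" for s
    using local[OF that(2)] u that(1) max_inner_scaleR[OF C, of s u]
    by (simp add: scaleR_mem_polar_cone_iff algebra_simps)
  have "\<forall>\<^sub>F s in at_right 1. s *\<^sub>R u \<in> U \<and> 1 < s"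
    using U(1,3) by (intro eventually_conj eventually_at_right_less eventually_scaleR_mem_open) auto
  then obtain s1 where "s1 *\<^sub>R u \<in> U" "1 < s1"
    using eventually_happens'[OF trivial_limit_at_right_real] by blast
  have "\<forall>\<^sub>F s in at_left 1. s *\<^sub>R u \<in> U \<and> s \<in> {0<..<1}"
    using U(1,3) by (intro eventually_conj eventually_at_left_real eventually_scaleR_mem_open) auto
  then obtain s0 where "s0 *\<^sub>R u \<in> U" "s0 \<in> {0<..<1}"
    using eventually_happens'[OF trivial_limit_at_left_real] by blast
  have u_eq: "max_inner C u = \<mu> \<bullet> u"
    using along_ray[of s1] along_ray[of s0] \<open>1 < s1\<close> \<open>s0 \<in> {0<..<1}\<close> \<open>s1 *\<^sub>R u \<in> U\<close> \<open>s0 *\<^sub>R u \<in> U\<close>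
    by (simp add: mult_le_cancel_left)
  fix h assume h: "h \<in> polar_cone D"
  have "\<forall>\<^sub>F s in at_right 0. s *\<^sub>R h \<in> U \<and> 0 < s"
    using U(1,2) by (intro eventually_conj eventually_at_right_less eventually_scaleR_mem_open) auto
  then obtain s where "s *\<^sub>R h \<in> U" "0 < s"
    using eventually_happens'[OF trivial_limit_at_right_real] by blast
  then have "s * (\<mu> \<bullet> h) \<le> s * max_inner C h"
    using local[of "s *\<^sub>R h"] h u_eq max_inner_scaleR[OF C, of s h]
    by (simp add: scaleR_mem_polar_cone_iff inner_diff_right)
  then show "max_inner C u + \<mu> \<bullet> (h - u) \<le> max_inner C h"
    using \<open>0 < s\<close> u_eq by (simp add: inner_diff_right)
qed

lemma max_inner_active_nonempty: "finite C \<Longrightarrow> C \<noteq> {} \<Longrightarrow> {c\<in>C. c \<bullet> u = max_inner C u} \<noteq> {}"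
  by (metis (mono_tags, lifting) empty_Collect_eq max_inner_attained)

lemma subgradient_on_active_face:
  fixes C D :: "'a::real_inner set"
  assumes C: "finite C" "C \<noteq> {}" and D: "finite D" and u: "u \<in> polar_cone D"
    and subgrad: "\<forall>h\<in>polar_cone D. max_inner C u + \<mu> \<bullet> (h - u) \<le> max_inner C h"
    and h: "h \<in> polar_cone {d\<in>D. d \<bullet> u = 0}"
  shows "\<mu> \<bullet> h \<le> max_inner {c\<in>C. c \<bullet> u = max_inner C u} h"
proof -
  define I where "I = {c\<in>C. c \<bullet> u = max_inner C u}"
  define S where "S = {d\<in>D. d \<bullet> u = 0}"
  have I: "finite I" "I \<noteq> {}"
    using C max_inner_active_nonempty[OF C] unfolding I_def by auto
  have "((\<lambda>s. s *\<^sub>R h) \<longlongrightarrow> 0 *\<^sub>R h) (at_right 0)"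
    by (intro tendsto_intros)
  then have "\<forall>\<^sub>F s in at_right 0.
      polyhedral_sublinear C D (u + s *\<^sub>R h) = ereal (max_inner C u) + polyhedral_sublinear I S (s *\<^sub>R h)"
    unfolding I_def S_def scale_zero_left by (rule eventually_compose_filterlim[OF polyhedral_sublinear_local[OF C D u]])
  moreover have "\<forall>\<^sub>F s in at_right 0. (0::real) < s"
    by (rule eventually_at_right_less)
  ultimately have "\<forall>\<^sub>F s in at_right 0. polyhedral_sublinear C D (u + s *\<^sub>R h) =
      ereal (max_inner C u) + polyhedral_sublinear I S (s *\<^sub>R h) \<and> 0 < s"
    by (rule eventually_conj)
  then obtain s where s: "0 < s" and
    local: "polyhedral_sublinear C D (u + s *\<^sub>R h) = ereal (max_inner C u) + polyhedral_sublinear I S (s *\<^sub>R h)"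
    using eventually_happens'[OF trivial_limit_at_right_real] by blast
  have "polyhedral_sublinear I S (s *\<^sub>R h) = ereal (s * max_inner I h)"
    using h s max_inner_scaleR[OF I, of s h]
    unfolding S_def polyhedral_sublinear_def by (simp add: scaleR_mem_polar_cone_iff)
  with local have "polyhedral_sublinear C D (u + s *\<^sub>R h) = ereal (max_inner C u + s * max_inner I h)"
    by simp
  then have "u + s *\<^sub>R h \<in> polar_cone D" "max_inner C (u + s *\<^sub>R h) = max_inner C u + s * max_inner I h"
    unfolding polyhedral_sublinear_def by (auto split: if_splits)
  then have "s * (\<mu> \<bullet> h) \<le> s * max_inner I h"
    using subgrad by auto
  then show ?thesis
    using s unfolding I_def by simp
qed

lemma eventually_not_subgradient_at_zero:
  fixes y :: "'a::real_inner"
  assumes "y \<in> polar_cone S" "max_inner I y < 0"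
  shows "\<forall>\<^sub>F \<mu> in nhds 0. \<not> (\<forall>h\<in>polar_cone S. \<mu> \<bullet> h \<le> max_inner I h)"
proof -
  have "((\<lambda>\<mu>. \<mu> \<bullet> y) \<longlongrightarrow> 0 \<bullet> y) (nhds 0)"
    by (intro tendsto_intros filterlim_ident)
  then have "\<forall>\<^sub>F \<mu> in nhds 0. max_inner I y < \<mu> \<bullet> y"
    using assms(2) by (auto dest: order_tendstoD(1))
  then show ?thesis
    by (rule eventually_mono) (use assms(1) in \<open>auto simp: not_le\<close>)
qed

lemma active_face_of_subgradient:
  fixes C D :: "'a::real_inner set"
  assumes C: "finite C" "C \<noteq> {}" and D: "finite D" and u: "u \<in> polar_cone D"
    and subgrad: "\<forall>h\<in>polar_cone D. max_inner C u + \<mu> \<bullet> (h - u) \<le> max_inner C h"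
    and pos: "0 < max_inner C u"
  shows "\<exists>I\<subseteq>C. \<exists>S\<subseteq>D. \<exists>y\<in>polar_cone S. max_inner I y < 0 \<and> (\<forall>h\<in>polar_cone S. \<mu> \<bullet> h \<le> max_inner I h)"
proof (intro exI conjI bexI)
  define I where "I = {c\<in>C. c \<bullet> u = max_inner C u}"
  define S where "S = {d\<in>D. d \<bullet> u = 0}"
  show "I \<subseteq> C" "S \<subseteq> D" "- u \<in> polar_cone S"
    unfolding I_def S_def polar_cone_def by auto
  have "finite I" "I \<noteq> {}"
    using C max_inner_active_nonempty[OF C] unfolding I_def by auto
  then obtain c where "c \<in> I" "max_inner I (- u) = c \<bullet> (- u)"
    by (rule max_inner_attained)
  then show "max_inner I (- u) < 0"
    using pos unfolding I_def by simp
  show "\<forall>h\<in>polar_cone S. \<mu> \<bullet> h \<le> max_inner I h"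
    using subgradient_on_active_face[OF C D u subgrad] unfolding I_def S_def by blast
qed

text \<open>By \<open>active_face_of_subgradient\<close>, a subgradient at a point where \<open>max_inner C\<close> is positive
  is a subgradient of some face model that takes a negative value. There are only finitely many
  faces \<open>(I, S)\<close>, and for each of them such subgradients stay away from \<open>0\<close>.\<close>

lemma eventually_small_subgradient_at_zero:
  fixes C D :: "'a::real_inner set"
  assumes C: "finite C" "C \<noteq> {}" and D: "finite D"
  shows "\<forall>\<^sub>F \<mu> in nhds 0. \<forall>u\<in>polar_cone D.
    (\<forall>h\<in>polar_cone D. max_inner C u + \<mu> \<bullet> (h - u) \<le> max_inner C h) \<longrightarrow> max_inner C u \<le> 0"
proof -
  have "\<forall>(I, S)\<in>Pow C \<times> Pow D. \<forall>\<^sub>F \<mu> in nhds 0.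
      \<forall>y\<in>polar_cone S. max_inner I y < 0 \<longrightarrow> \<not> (\<forall>h\<in>polar_cone S. \<mu> \<bullet> h \<le> max_inner I h)"
  proof clarify
    fix I S
    show "\<forall>\<^sub>F \<mu> in nhds 0. \<forall>y\<in>polar_cone S. max_inner I y < 0 \<longrightarrow> \<not> (\<forall>h\<in>polar_cone S. \<mu> \<bullet> h \<le> max_inner I h)"
    proof (cases "\<exists>y\<in>polar_cone S. max_inner I y < 0")
      case True
      then show ?thesis
        using eventually_not_subgradient_at_zero by (force elim: eventually_mono)
    qed auto
  qed
  then have "\<forall>\<^sub>F \<mu> in nhds 0. \<forall>(I, S)\<in>Pow C \<times> Pow D.
      \<forall>y\<in>polar_cone S. max_inner I y < 0 \<longrightarrow> \<not> (\<forall>h\<in>polar_cone S. \<mu> \<bullet> h \<le> max_inner I h)"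
    using C D by (intro eventually_ball_finite) (auto simp: split_beta)
  then show ?thesis
  proof (rule eventually_mono, intro ballI impI)
    fix \<mu> u
    assume faces: "\<forall>(I, S)\<in>Pow C \<times> Pow D.
        \<forall>y\<in>polar_cone S. max_inner I y < 0 \<longrightarrow> \<not> (\<forall>h\<in>polar_cone S. \<mu> \<bullet> h \<le> max_inner I h)"
      and u: "u \<in> polar_cone D"
      and subgrad: "\<forall>h\<in>polar_cone D. max_inner C u + \<mu> \<bullet> (h - u) \<le> max_inner C h"
    show "max_inner C u \<le> 0"
    proof (rule ccontr)
      assume "\<not> max_inner C u \<le> 0"
      then obtain I S y where "I \<subseteq> C" "S \<subseteq> D" "y \<in> polar_cone S" "max_inner I y < 0"
        "\<forall>h\<in>polar_cone S. \<mu> \<bullet> h \<le> max_inner I h"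
        using active_face_of_subgradient[OF C D u subgrad] by auto
      then show False
        using faces by blast
    qed
  qed
qed

section \<open>Limits inferior and second-order difference quotients\<close>

lemma Liminf_le_along:
  fixes f :: "'a \<Rightarrow> 'b::complete_linorder"
  assumes "filterlim \<phi> F G" "G \<noteq> bot" "\<forall>\<^sub>F s in G. f (\<phi> s) \<le> c"
  shows "Liminf F f \<le> c"
proof (rule Liminf_least)
  fix P assume "eventually P F"
  then have "\<forall>\<^sub>F s in G. P (\<phi> s)"
    using assms(1) unfolding filterlim_iff by blast
  then have "\<forall>\<^sub>F s in G. P (\<phi> s) \<and> f (\<phi> s) \<le> c"
    using assms(3) by (rule eventually_conj)
  then obtain s where "P (\<phi> s)" "f (\<phi> s) \<le> c"
    using eventually_happens'[OF assms(2)] by blast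
  then show "(INF x\<in>Collect P. f x) \<le> c"
    by (intro INF_lower2[of "\<phi> s"]) auto
qed

lemma Liminf_prod_nhds_snd:
  fixes \<psi> :: "'a::topological_space \<Rightarrow> 'b::complete_linorder"
  assumes "F \<noteq> bot" "\<forall>y<\<psi> w. \<forall>\<^sub>F w' in nhds w. y < \<psi> w'"
  shows "Liminf (F \<times>\<^sub>F nhds w) (\<lambda>(t, w'). \<psi> w') = \<psi> w"
proof (rule antisym)
  have "filterlim (\<lambda>t. (t, w)) (F \<times>\<^sub>F nhds w) F"
    by (intro filterlim_Pair filterlim_ident tendsto_const)
  then show "Liminf (F \<times>\<^sub>F nhds w) (\<lambda>(t, w'). \<psi> w') \<le> \<psi> w"
    using assms(1) by (rule Liminf_le_along) simp
  show "\<psi> w \<le> Liminf (F \<times>\<^sub>F nhds w) (\<lambda>(t, w'). \<psi> w')"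
    unfolding le_Liminf_iff
  proof (intro allI impI)
    fix y assume "y < \<psi> w"
    then have "\<forall>\<^sub>F (t, w') in F \<times>\<^sub>F nhds w. y < \<psi> w'"
      using assms eventually_prod2 by blast
    then show "\<forall>\<^sub>F z in F \<times>\<^sub>F nhds w. y < (case z of (t, w') \<Rightarrow> \<psi> w')"
      by (rule eventually_mono) auto
  qed
qed

lemma Liminf_eq_PInf_if_ge_divide:
  fixes f :: "'a \<Rightarrow> ereal"
  assumes "0 < c" "(\<tau> \<longlongrightarrow> 0) F" "\<forall>\<^sub>F x in F. 0 < \<tau> x \<and> ereal (c / \<tau> x) \<le> f x"
  shows "Liminf F f = \<infinity>"
proof -
  have "\<forall>\<^sub>F x in F. y < f x" if "y < \<infinity>" for y
  proof -
    obtain M where M: "0 < M" "y < ereal M"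
    proof (cases y)
      case (real r)
      then show thesis
        using that[of "\<bar>r\<bar> + 1"] by simp
    qed (use \<open>y < \<infinity>\<close> that[of 1] in auto)
    have "\<forall>\<^sub>F x in F. \<tau> x < c / M"
      using order_tendstoD(2)[OF assms(2), of "c / M"] M(1) assms(1) by simp
    with assms(3) show ?thesis
    proof eventually_elim
      case (elim x)
      then have "ereal M < ereal (c / \<tau> x)"
        using M(1) by (simp add: field_simps)
      then show ?case
        using M(2) elim by (meson less_le_trans order.strict_trans)
    qed
  qed
  then show ?thesis
    using le_Liminf_iff[of \<infinity> F f] by (simp add: top_unique[where 'a=ereal, symmetric])
qed

lemma attentive_filter_le_nhds: "attentive_filter f xb vb \<le> nhds (xb, vb)"
  unfolding attentive_filter_def by (auto intro: le_infI1)

lemma eventually_attentive_filter_gph: "\<forall>\<^sub>F p in attentive_filter f xb vb. p \<in> gph_subdiff f"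
proof -
  have "attentive_filter f xb vb \<le> principal (gph_subdiff f)"
    unfolding attentive_filter_def by (auto intro: le_infI1)
  then show ?thesis
    by (rule filter_leD) (simp add: eventually_principal)
qed

lemma second_diff_quot_nonneg:
  assumes "(x, v) \<in> gph_subdiff f" "0 < t"
  shows "0 \<le> second_diff_quot f x v t w"
proof -
  have v: "v \<in> subdiff f x"
    using assms(1) unfolding gph_subdiff_def by simp
  then obtain a where a: "f x = ereal a"
    unfolding subdiff_def by (cases "f x") auto
  have "ereal (a + t * (v \<bullet> w)) \<le> f (x + t *\<^sub>R w)"
    using v a unfolding subdiff_def by (auto dest: spec[of _ "x + t *\<^sub>R w"])
  then show ?thesis
    unfolding second_diff_quot_def using a assms(2)
    by (cases "f (x + t *\<^sub>R w)") (auto simp: divide_nonneg_pos)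
qed

lemma strict_second_subderiv_nonneg: "0 \<le> strict_second_subderiv f xb vb w"
  unfolding strict_second_subderiv_def
proof (rule Liminf_bounded)
  have "\<forall>\<^sub>F z in (at_right (0::real) \<times>\<^sub>F nhds w) \<times>\<^sub>F attentive_filter f xb vb.
      (0 < fst (fst z) \<and> True) \<and> snd z \<in> gph_subdiff f"
    by (intro eventually_prodI eventually_at_right_less eventually_True eventually_attentive_filter_gph)
  then show "\<forall>\<^sub>F z in (at_right 0 \<times>\<^sub>F nhds w) \<times>\<^sub>F attentive_filter f xb vb.
      0 \<le> (\<lambda>((t, w'), (x, v)). second_diff_quot f x v t w') z"
    by (rule eventually_mono) (auto simp: second_diff_quot_nonneg)
qed

lemma second_diff_quot_ereal:
  "f x = ereal a \<Longrightarrow> f (x + t *\<^sub>R w) = ereal b \<Longrightarrow> 0 < t \<Longrightarrow>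
    second_diff_quot f x v t w = ereal ((b - a - t * (v \<bullet> w)) / (t\<^sup>2 / 2))"
  unfolding second_diff_quot_def by simp

lemma second_diff_quot_PInf:
  "f x = ereal a \<Longrightarrow> f (x + t *\<^sub>R w) = \<infinity> \<Longrightarrow> 0 < t \<Longrightarrow> second_diff_quot f x v t w = \<infinity>"
  unfolding second_diff_quot_def by simp

lemma tendsto_fst_prod_at: "(fst \<longlongrightarrow> a) ((at a within S) \<times>\<^sub>F G)"
  by (rule filterlim_compose[OF tendsto_ident_at filterlim_fst])

lemma strict_second_subderiv_filter_limits:
  fixes w xb vb :: "'a::real_inner" and f :: "'a \<Rightarrow> ereal"
  defines "F \<equiv> (at_right (0::real) \<times>\<^sub>F nhds w) \<times>\<^sub>F attentive_filter f xb vb"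
  shows "filterlim (\<lambda>z. fst (fst z)) (at_right 0) F" and "((\<lambda>z. fst (fst z)) \<longlongrightarrow> 0) F"
    and "((\<lambda>z. snd (fst z)) \<longlongrightarrow> w) F"
    and "((\<lambda>z. fst (snd z)) \<longlongrightarrow> xb) F" and "((\<lambda>z. snd (snd z)) \<longlongrightarrow> vb) F"
proof -
  show "filterlim (\<lambda>z. fst (fst z)) (at_right 0) F"
    unfolding F_def by (rule filterlim_compose[OF filterlim_fst filterlim_fst])
  show "((\<lambda>z. fst (fst z)) \<longlongrightarrow> 0) F"
    unfolding F_def by (rule filterlim_compose[OF tendsto_fst_prod_at filterlim_fst])
  show "((\<lambda>z. snd (fst z)) \<longlongrightarrow> w) F"
    unfolding F_def by (rule filterlim_compose[OF filterlim_snd filterlim_fst])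
  have "((\<lambda>z. snd z) \<longlongrightarrow> (xb, vb)) F"
    unfolding F_def by (rule filterlim_compose[OF tendsto_mono[OF attentive_filter_le_nhds filterlim_ident] filterlim_snd])
  then show "((\<lambda>z. fst (snd z)) \<longlongrightarrow> xb) F" "((\<lambda>z. snd (snd z)) \<longlongrightarrow> vb) F"
    using tendsto_fst tendsto_snd by fastforce+
qed

section \<open>The local model of a polyhedral function\<close>

locale polyhedral_local_model =
  fixes g :: "'a::euclidean_space \<Rightarrow> ereal" and zb lb :: 'a and C D U :: "'a set" and gz :: real
  assumes finite_C: "finite C" and C_nonempty: "C \<noteq> {}" and finite_D: "finite D"
    and open_U: "open U" and zero_in_U: "0 \<in> U"
    and g_zb: "g zb = ereal gz"
    and g_near_zb: "\<And>h. h \<in> U \<Longrightarrow> g (zb + h) = ereal (gz + lb \<bullet> h) + polyhedral_sublinear C D h"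
    and lb_subgradient: "lb \<in> subdiff g zb"
begin

lemma subgradient_near_zb:
  assumes gph: "(zb + u, lb + \<mu>) \<in> gph_subdiff g" and u: "u \<in> U"
  shows "u \<in> polar_cone D" and "\<forall>h\<in>polar_cone D. max_inner C u + \<mu> \<bullet> (h - u) \<le> max_inner C h"
proof -
  have sub: "lb + \<mu> \<in> subdiff g (zb + u)"
    using gph unfolding gph_subdiff_def by simp
  then have "\<bar>g (zb + u)\<bar> \<noteq> \<infinity>"
    unfolding subdiff_def by simp
  then show u_dom: "u \<in> polar_cone D"
    using g_near_zb[OF u] unfolding polyhedral_sublinear_def by (auto split: if_splits)
  have "max_inner C u + \<mu> \<bullet> (h - u) \<le> max_inner C h" if "h \<in> U" "h \<in> polar_cone D" for h
  proof -
    have "g (zb + u) + ereal ((lb + \<mu>) \<bullet> (zb + h - (zb + u))) \<le> g (zb + h)"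
      using sub unfolding subdiff_def by blast
    then have "gz + lb \<bullet> u + max_inner C u + (lb + \<mu>) \<bullet> (h - u) \<le> gz + lb \<bullet> h + max_inner C h"
      using g_near_zb[OF u] g_near_zb[OF that(1)] u_dom that(2)
      by (simp add: polyhedral_sublinear_def)
    then show ?thesis
      by (simp add: inner_add_left inner_diff_right)
  qed
  then show "\<forall>h\<in>polar_cone D. max_inner C u + \<mu> \<bullet> (h - u) \<le> max_inner C h"
    using max_inner_local_subgradient_global[OF finite_C C_nonempty open_U zero_in_U u u_dom] by blast
qed

lemma max_inner_nonneg: "h \<in> polar_cone D \<Longrightarrow> 0 \<le> max_inner C h"
  using subgradient_near_zb[of 0 0] lb_subgradient zero_in_U max_inner_scaleR[OF finite_C C_nonempty, of 0 0]
  by (simp add: gph_subdiff_def)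

lemma polyhedral_sublinear_nonneg: "0 \<le> polyhedral_sublinear C D h"
  using max_inner_nonneg unfolding polyhedral_sublinear_def by simp

lemma difference_quotient_eventually:
  "\<forall>\<^sub>F (t, w') in at_right 0 \<times>\<^sub>F nhds w.
    (g (zb + t *\<^sub>R w') - g zb) / ereal t = ereal (lb \<bullet> w') + polyhedral_sublinear C D w'"
proof -
  have "((\<lambda>z. fst z *\<^sub>R snd z) \<longlongrightarrow> 0 *\<^sub>R w) (at_right (0::real) \<times>\<^sub>F nhds w)"
    by (intro tendsto_scaleR tendsto_fst_prod_at filterlim_snd)
  then have "\<forall>\<^sub>F z in at_right 0 \<times>\<^sub>F nhds w. fst z *\<^sub>R snd z \<in> U \<and> 0 < fst z"
    using open_U zero_in_U
    by (intro eventually_conj topological_tendstoD eventually_compose_filterlim[OF eventually_at_right_less filterlim_fst]) auto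
  then show ?thesis
  proof (rule eventually_mono)
    fix z :: "real \<times> 'a"
    obtain t w' where z: "z = (t, w')"
      by (cases z)
    assume "fst z *\<^sub>R snd z \<in> U \<and> 0 < fst z"
    then have tw: "t *\<^sub>R w' \<in> U" and t: "0 < t"
      unfolding z by simp_all
    have "g (zb + t *\<^sub>R w') = ereal (gz + t * (lb \<bullet> w')) + ereal t * polyhedral_sublinear C D w'"
      using g_near_zb[OF tw] polyhedral_sublinear_scaleR[OF finite_C C_nonempty t] by simp
    then show "case z of (t, w') \<Rightarrow>
        (g (zb + t *\<^sub>R w') - g zb) / ereal t = ereal (lb \<bullet> w') + polyhedral_sublinear C D w'"
      unfolding z using t g_zb polyhedral_sublinear_nonneg[of w']
      by (cases "polyhedral_sublinear C D w'") (simp_all add: field_simps)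
  qed
qed

lemma subderiv_eq: "subderiv g zb w = ereal (lb \<bullet> w) + polyhedral_sublinear C D w"
proof -
  have "subderiv g zb w = Liminf (at_right (0::real) \<times>\<^sub>F nhds w) (\<lambda>(t, w'). ereal (lb \<bullet> w') + polyhedral_sublinear C D w')"
    using difference_quotient_eventually[of w] unfolding subderiv_def case_prod_beta
    by (rule Liminf_eq)
  also have "\<dots> = ereal (lb \<bullet> w) + polyhedral_sublinear C D w"
    using polyhedral_sublinear_lsc[OF finite_C C_nonempty]
    by (intro Liminf_prod_nhds_snd) auto
  finally show ?thesis .
qed

lemma critical_cone_eq: "critical_cone g zb lb = polar_cone (C \<union> D)"
proof -
  have "w \<in> critical_cone g zb lb \<longleftrightarrow> polyhedral_sublinear C D w = 0" for w
    unfolding critical_cone_def subderiv_eq using polyhedral_sublinear_nonneg[of w]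
    by (cases "polyhedral_sublinear C D w") auto
  also have "polyhedral_sublinear C D w = 0 \<longleftrightarrow> w \<in> polar_cone (C \<union> D)" for w
    using max_inner_nonneg[of w] mem_polar_cone_Un[OF finite_C C_nonempty, of w]
    unfolding polyhedral_sublinear_def by auto
  finally show ?thesis
    by blast
qed

lemma g_near_zb_critical:
  "k \<in> U \<Longrightarrow> k \<in> polar_cone (C \<union> D) \<Longrightarrow> g (zb + k) = ereal (gz + lb \<bullet> k)"
  using g_near_zb max_inner_nonneg[of k] mem_polar_cone_Un[OF finite_C C_nonempty, of k]
  unfolding polyhedral_sublinear_def by simp

lemma gph_subdiff_near_zb_critical:
  assumes "k \<in> U" "k \<in> polar_cone (C \<union> D)"
  shows "(zb + k, lb) \<in> gph_subdiff g"
proof -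
  have "g (zb + k) + ereal (lb \<bullet> (y - (zb + k))) = g zb + ereal (lb \<bullet> (y - zb))" for y
    using g_near_zb_critical[OF assms] g_zb by (simp add: inner_diff_right inner_add_right)
  then show ?thesis
    using lb_subgradient g_near_zb_critical[OF assms] unfolding gph_subdiff_def subdiff_def by simp
qed

lemma filterlim_attentive_filter_critical_ray:
  assumes k: "k \<in> polar_cone (C \<union> D)"
  shows "filterlim (\<lambda>s. (zb + s *\<^sub>R k, lb)) (attentive_filter g zb lb) (at_right 0)"
proof -
  have "\<forall>\<^sub>F s in at_right 0. s *\<^sub>R k \<in> U"
    using open_U zero_in_U by (intro eventually_scaleR_mem_open) auto
  moreover have "\<forall>\<^sub>F s in at_right 0. s *\<^sub>R k \<in> polar_cone (C \<union> D)"
    using eventually_at_right_less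
    by (rule eventually_mono) (auto intro!: convex_cone_scaleR[OF convex_cone_polar_cone _ k])
  ultimately have "\<forall>\<^sub>F s in at_right 0. s *\<^sub>R k \<in> U \<and> s *\<^sub>R k \<in> polar_cone (C \<union> D)"
    by (rule eventually_conj)
  then have ev: "\<forall>\<^sub>F s in at_right 0. (zb + s *\<^sub>R k, lb) \<in> gph_subdiff g \<and>
      ereal (gz + s * (lb \<bullet> k)) = g (zb + s *\<^sub>R k)"
    by (rule eventually_mono) (simp add: gph_subdiff_near_zb_critical g_near_zb_critical)
  have "((\<lambda>s. ereal (gz + s * (lb \<bullet> k))) \<longlongrightarrow> ereal (gz + 0 * (lb \<bullet> k))) (at_right (0::real))"
    by (intro tendsto_intros)
  then have "((\<lambda>s. ereal (gz + s * (lb \<bullet> k))) \<longlongrightarrow> g zb) (at_right (0::real))"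
    using g_zb by simp
  moreover have "\<forall>\<^sub>F s in at_right 0. ereal (gz + s * (lb \<bullet> k)) = g (zb + s *\<^sub>R k)"
    using ev by (rule eventually_mono) simp
  ultimately have "((\<lambda>s. g (zb + s *\<^sub>R k)) \<longlongrightarrow> g zb) (at_right 0)"
    by (rule Lim_transform_eventually)
  moreover have "((\<lambda>s. (zb + s *\<^sub>R k, lb)) \<longlongrightarrow> (zb + 0 *\<^sub>R k, lb)) (at_right (0::real))"
    by (intro tendsto_intros)
  ultimately show ?thesis
    unfolding attentive_filter_def filterlim_inf filterlim_principal filterlim_filtercomap_iff
    using eventually_mono[OF ev conjunct1] by (simp add: o_def)
qed

text \<open>The graph points \<open>(zb + s w2, lb)\<close> approach \<open>(zb, lb)\<close> attentively, and \<open>g\<close> is affine on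
  the segment from \<open>zb + s w2\<close> to \<open>zb + s (w1 + w2) / 2\<close>, so the quotient with step \<open>s / 2\<close>
  in direction \<open>w1 - w2\<close> vanishes.\<close>

lemma strict_second_subderiv_diff_critical_le:
  assumes w1: "w1 \<in> polar_cone (C \<union> D)" and w2: "w2 \<in> polar_cone (C \<union> D)"
  shows "strict_second_subderiv g zb lb (w1 - w2) \<le> 0"
proof -
  define m where "m = (1 / 2) *\<^sub>R (w1 + w2)"
  have m: "m \<in> polar_cone (C \<union> D)"
    unfolding m_def using w1 w2 convex_cone_polar_cone by (auto intro!: convex_cone_scaleR convex_cone_add)
  have "((\<lambda>s. s / 2) \<longlongrightarrow> 0 / 2) (at_right (0::real))"
    by (intro tendsto_intros) simp
  moreover have "\<forall>\<^sub>F s in at_right 0. 0 < s / (2::real)"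
    using eventually_at_right_less by (rule eventually_mono) simp
  ultimately have "filterlim (\<lambda>s. s / 2) (at_right 0) (at_right (0::real))"
    by (simp add: tendsto_imp_filterlim_at_right)
  then have path: "filterlim (\<lambda>s. ((s / 2, w1 - w2), (zb + s *\<^sub>R w2, lb)))
      ((at_right 0 \<times>\<^sub>F nhds (w1 - w2)) \<times>\<^sub>F attentive_filter g zb lb) (at_right 0)"
    by (intro filterlim_Pair tendsto_const filterlim_attentive_filter_critical_ray w2)
  have "\<forall>\<^sub>F s in at_right 0. s *\<^sub>R w2 \<in> U \<and> s *\<^sub>R m \<in> U \<and> 0 < s"
    using open_U zero_in_U by (intro eventually_conj eventually_at_right_less eventually_scaleR_mem_open) auto
  then have "\<forall>\<^sub>F s in at_right 0. second_diff_quot g (zb + s *\<^sub>R w2) lb (s / 2) (w1 - w2) \<le> 0"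
  proof (rule eventually_mono, elim conjE)
    fix s :: real assume U: "s *\<^sub>R w2 \<in> U" "s *\<^sub>R m \<in> U" and s: "0 < s"
    have K: "s *\<^sub>R w2 \<in> polar_cone (C \<union> D)" "s *\<^sub>R m \<in> polar_cone (C \<union> D)"
      using w2 m s convex_cone_polar_cone by (auto intro!: convex_cone_scaleR)
    have "zb + s *\<^sub>R w2 + (s / 2) *\<^sub>R (w1 - w2) = zb + s *\<^sub>R m"
      unfolding m_def by (simp add: algebra_simps flip: scaleR_add_left)
    then have "second_diff_quot g (zb + s *\<^sub>R w2) lb (s / 2) (w1 - w2) = ereal 0"
      using second_diff_quot_ereal[where f = g and x = "zb + s *\<^sub>R w2" and t = "s / 2" and w = "w1 - w2",
          OF g_near_zb_critical[OF U(1) K(1)]] g_near_zb_critical[OF U(2) K(2)] s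
      unfolding m_def by (simp add: inner_add_right inner_diff_right algebra_simps)
    then show "second_diff_quot g (zb + s *\<^sub>R w2) lb (s / 2) (w1 - w2) \<le> 0"
      by simp
  qed
  then show ?thesis
    unfolding strict_second_subderiv_def by (intro Liminf_le_along[OF path]) simp_all
qed

lemma eventually_attentive_filter_critical:
  "\<forall>\<^sub>F p in attentive_filter g zb lb. fst p - zb \<in> U \<and> fst p - zb \<in> polar_cone (C \<union> D)"
proof -
  have lim: "((\<lambda>p. p) \<longlongrightarrow> (zb, lb)) (attentive_filter g zb lb)"
    by (rule tendsto_mono[OF attentive_filter_le_nhds filterlim_ident])
  have "((\<lambda>p. fst p - zb) \<longlongrightarrow> 0) (attentive_filter g zb lb)"
    "((\<lambda>p. snd p - lb) \<longlongrightarrow> 0) (attentive_filter g zb lb)"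
    using tendsto_diff[OF tendsto_fst[OF lim] tendsto_const[of zb]]
      tendsto_diff[OF tendsto_snd[OF lim] tendsto_const[of lb]] by simp_all
  then have "\<forall>\<^sub>F p in attentive_filter g zb lb. fst p - zb \<in> U"
    and small: "\<forall>\<^sub>F p in attentive_filter g zb lb. \<forall>u\<in>polar_cone D.
      (\<forall>h\<in>polar_cone D. max_inner C u + (snd p - lb) \<bullet> (h - u) \<le> max_inner C h) \<longrightarrow> max_inner C u \<le> 0"
    using open_U zero_in_U
    by (auto intro: topological_tendstoD eventually_compose_filterlim[OF
          eventually_small_subgradient_at_zero[OF finite_C C_nonempty finite_D]])
  then show ?thesis
    using eventually_attentive_filter_gph
  proof eventually_elim
    case (elim p)
    then have "(zb + (fst p - zb), lb + (snd p - lb)) \<in> gph_subdiff g"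
      by (simp add: prod_eq_iff)
    then show ?case
      using elim subgradient_near_zb mem_polar_cone_Un[OF finite_C C_nonempty] by blast
  qed
qed

text \<open>The \<open>lb\<close>-terms cancel and \<open>e\<close> vanishes at \<open>u\<close>, so the numerator of the quotient is
  \<open>max_inner C (u + t w') - t \<mu>\<bullet>w' \<ge> \<sigma> t e\<bullet>w' - t \<sigma> / 4 \<ge> \<sigma> t / 4\<close>.\<close>

lemma second_diff_quot_lower_bound:
  assumes u: "u \<in> U" "u \<in> polar_cone (C \<union> D)" and z: "u + t *\<^sub>R w' \<in> U" and t: "0 < t"
    and e: "\<forall>k\<in>polar_cone (C \<union> D). e \<bullet> k = 0" "1 / 2 \<le> e \<bullet> w'"
    and \<sigma>: "0 < \<sigma>" "\<forall>y\<in>polar_cone D. \<sigma> * (e \<bullet> y) \<le> max_inner C y"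
    and \<mu>: "norm \<mu> * norm w' \<le> \<sigma> / 4"
  shows "ereal (\<sigma> / 2 / t) \<le> second_diff_quot g (zb + u) (lb + \<mu>) t w'"
proof (cases "u + t *\<^sub>R w' \<in> polar_cone D")
  case False
  then have "g (zb + u + t *\<^sub>R w') = \<infinity>"
    using g_near_zb[OF z] by (simp add: polyhedral_sublinear_def add.assoc)
  then show ?thesis
    using second_diff_quot_PInf[where f = g and x = "zb + u", OF g_near_zb_critical[OF u] _ t] by simp
next
  case True
  have "e \<bullet> (u + t *\<^sub>R w') = t * (e \<bullet> w')"
    using e(1) u(2) by (simp add: inner_add_right)
  then have "\<sigma> * t / 2 \<le> \<sigma> * (e \<bullet> (u + t *\<^sub>R w'))"
    using mult_left_mono[OF e(2), of "\<sigma> * t"] t \<sigma>(1) by simp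
  also have "\<dots> \<le> max_inner C (u + t *\<^sub>R w')"
    using \<sigma>(2) True by blast
  finally have "\<sigma> * t / 2 \<le> max_inner C (u + t *\<^sub>R w')" .
  moreover have "t * (\<mu> \<bullet> w') \<le> \<sigma> * t / 4"
    using mult_left_mono[OF order_trans[OF norm_cauchy_schwarz \<mu>], of t] t by (simp add: algebra_simps)
  ultimately have "\<sigma> * t / 4 \<le> max_inner C (u + t *\<^sub>R w') - t * (\<mu> \<bullet> w')"
    by linarith
  then have "(\<sigma> * t / 4) / (t\<^sup>2 / 2) \<le> (max_inner C (u + t *\<^sub>R w') - t * (\<mu> \<bullet> w')) / (t\<^sup>2 / 2)"
    using t by (intro divide_right_mono) auto
  moreover have "(\<sigma> * t / 4) / (t\<^sup>2 / 2) = \<sigma> / 2 / t"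
    using t by (simp add: field_simps power2_eq_square)
  moreover have "g (zb + u + t *\<^sub>R w') = ereal (gz + lb \<bullet> (u + t *\<^sub>R w') + max_inner C (u + t *\<^sub>R w'))"
    using g_near_zb[OF z] True by (simp add: polyhedral_sublinear_def add.assoc)
  ultimately show ?thesis
    using second_diff_quot_ereal[where f = g and x = "zb + u", OF g_near_zb_critical[OF u] _ t] t
    by (simp add: inner_add_right inner_add_left algebra_simps)
qed

lemma eventually_second_diff_quot_ge:
  assumes e: "e \<bullet> w = 1" "\<forall>k\<in>polar_cone (C \<union> D). e \<bullet> k = 0"
    and \<sigma>: "0 < \<sigma>" "\<forall>y\<in>polar_cone D. \<sigma> * (e \<bullet> y) \<le> max_inner C y"
  shows "\<forall>\<^sub>F ((t, w'), (x, v)) in (at_right 0 \<times>\<^sub>F nhds w) \<times>\<^sub>F attentive_filter g zb lb.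
    0 < t \<and> ereal (\<sigma> / 2 / t) \<le> second_diff_quot g x v t w'"
proof -
  let ?F = "(at_right (0::real) \<times>\<^sub>F nhds w) \<times>\<^sub>F attentive_filter g zb lb"
  define \<delta> where "\<delta> = \<sigma> / (4 * (norm w + 1))"
  have nw: "0 < norm w + 1"
    by (simp add: add_nonneg_pos)
  then have "0 < \<delta>"
    unfolding \<delta>_def using \<sigma>(1) by simp
  note lim = strict_second_subderiv_filter_limits[where w = w and f = g and xb = zb and vb = lb]
  have "((\<lambda>z. fst (snd z) - zb + fst (fst z) *\<^sub>R snd (fst z)) \<longlongrightarrow> zb - zb + 0 *\<^sub>R w) ?F"
    by (intro tendsto_intros lim)
  then have "\<forall>\<^sub>F z in ?F. fst (snd z) - zb + fst (fst z) *\<^sub>R snd (fst z) \<in> U"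
    using open_U zero_in_U by (intro topological_tendstoD) auto
  moreover have "\<forall>\<^sub>F z in ?F. 1 / 2 < e \<bullet> snd (fst z) \<and> norm (snd (fst z)) < norm w + 1"
    using order_tendstoD(1)[OF tendsto_inner[OF tendsto_const lim(3)], of "1 / 2" e]
      order_tendstoD(2)[OF tendsto_norm[OF lim(3)], of "norm w + 1"] e(1)
    by (intro eventually_conj) auto
  moreover have "\<forall>\<^sub>F z in ?F. norm (snd (snd z) - lb) < \<delta>"
    using order_tendstoD(2)[OF tendsto_norm[OF tendsto_diff[OF lim(5) tendsto_const[of lb]]], of \<delta>] \<open>0 < \<delta>\<close>
    by simp
  moreover have "\<forall>\<^sub>F z in ?F. fst (snd z) - zb \<in> U \<and> fst (snd z) - zb \<in> polar_cone (C \<union> D)"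
    by (rule eventually_compose_filterlim[OF eventually_attentive_filter_critical filterlim_snd])
  moreover have "\<forall>\<^sub>F z in ?F. 0 < fst (fst z)"
    by (rule eventually_compose_filterlim[OF eventually_at_right_less lim(1)])
  ultimately show ?thesis
    unfolding case_prod_beta
  proof eventually_elim
    case (elim z)
    define u \<mu> where "u = fst (snd z) - zb" and "\<mu> = snd (snd z) - lb"
    have "norm \<mu> * norm (snd (fst z)) \<le> \<delta> * (norm w + 1)"
      using elim \<open>0 < \<delta>\<close> unfolding \<mu>_def by (intro mult_mono) auto
    also have "\<dots> = \<sigma> / 4"
      unfolding \<delta>_def using nw by (simp add: field_simps)
    finally have "ereal (\<sigma> / 2 / fst (fst z)) \<le> second_diff_quot g (zb + u) (lb + \<mu>) (fst (fst z)) (snd (fst z))"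
      using elim e(2) \<sigma> unfolding u_def
      by (intro second_diff_quot_lower_bound) auto
    then show ?case
      using elim unfolding u_def \<mu>_def by simp
  qed
qed

lemma strict_second_subderiv_eq_PInf:
  assumes "w \<notin> {a - b | a b. a \<in> polar_cone (C \<union> D) \<and> b \<in> polar_cone (C \<union> D)}"
  shows "strict_second_subderiv g zb lb w = \<infinity>"
proof -
  obtain e where e: "e \<bullet> w = 1" "\<forall>k\<in>polar_cone (C \<union> D). e \<bullet> k = 0"
    using normal_vanishing_on_convex_cone[OF convex_cone_polar_cone assms] by blast
  have "\<forall>h\<in>polar_cone D. 0 \<le> max_inner C h" "\<forall>k\<in>polar_cone (C \<union> D). e \<bullet> k \<le> 0"
    using max_inner_nonneg e(2) by simp_all
  then obtain \<sigma> where \<sigma>: "0 < \<sigma>" "\<forall>y\<in>polar_cone D. \<sigma> * (e \<bullet> y) \<le> max_inner C y"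
    by (rule max_inner_dominates_inner[OF finite_C C_nonempty finite_D])
  let ?F = "(at_right (0::real) \<times>\<^sub>F nhds w) \<times>\<^sub>F attentive_filter g zb lb"
  have "((\<lambda>z. fst (fst z)) \<longlongrightarrow> 0) ?F"
    by (rule strict_second_subderiv_filter_limits)
  moreover have "\<forall>\<^sub>F z in ?F. 0 < fst (fst z) \<and>
      ereal (\<sigma> / 2 / fst (fst z)) \<le> (\<lambda>((t, w'), (x, v)). second_diff_quot g x v t w') z"
    using eventually_second_diff_quot_ge[OF e \<sigma>] by (rule eventually_mono) auto
  ultimately show ?thesis
    unfolding strict_second_subderiv_def using \<sigma>(1) by (intro Liminf_eq_PInf_if_ge_divide[of "\<sigma> / 2"]) auto
qed

end

lemma polyhedral_local_model_exists:
  fixes g :: "'a::euclidean_space \<Rightarrow> ereal"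
  assumes "polyhedral_fun g" and "(zb, lb) \<in> gph_subdiff g"
  obtains C D U gz where "polyhedral_local_model g zb lb C D U gz"
proof -
  obtain A B where A: "finite A" "A \<noteq> {}" and B: "finite B" and g: "g = max_affine_on A B"
    using assms(1) by (rule polyhedral_fun_eq_max_affine_on)
  have lb: "lb \<in> subdiff g zb"
    using assms(2) unfolding gph_subdiff_def by simp
  then have "\<bar>g zb\<bar> \<noteq> \<infinity>"
    unfolding subdiff_def by simp
  then have dom: "\<forall>(p, b)\<in>B. p \<bullet> zb \<le> b"
    unfolding g max_affine_on_def by (auto split: if_splits)
  define m where "m = Max ((\<lambda>(c, \<gamma>). c \<bullet> zb + \<gamma>) ` A)"
  define I where "I = fst ` {(c, \<gamma>)\<in>A. c \<bullet> zb + \<gamma> = m}"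
  define S where "S = fst ` {(p, b)\<in>B. p \<bullet> zb = b}"
  have "I \<noteq> {}"
  proof -
    have "m \<in> (\<lambda>(c, \<gamma>). c \<bullet> zb + \<gamma>) ` A"
      unfolding m_def using A by (intro Max_in) auto
    then show ?thesis
      unfolding I_def by force
  qed
  moreover have "finite I" "finite S"
    unfolding I_def S_def using A B by (auto intro: rev_finite_subset)
  moreover obtain U where "open U" "0 \<in> U" and near: "\<And>h. h \<in> U \<Longrightarrow> g (zb + h) = ereal m + polyhedral_sublinear I S h"
    using max_affine_on_local(2)[OF A B dom] unfolding g m_def I_def S_def eventually_nhds by blast
  moreover have "polyhedral_sublinear I S h = ereal (lb \<bullet> h) + polyhedral_sublinear ((\<lambda>c. c - lb) ` I) S h" for h
    using max_inner_translate[OF \<open>finite I\<close> \<open>I \<noteq> {}\<close>, of lb h] unfolding polyhedral_sublinear_def by simp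
  moreover have "g zb = ereal m"
    using max_affine_on_local(1)[OF A B dom] unfolding g m_def by simp
  ultimately have "polyhedral_local_model g zb lb ((\<lambda>c. c - lb) ` I) S U m"
    using lb by unfold_locales (auto simp flip: add.assoc)
  then show thesis
    by (rule that)
qed

theorem proposition4p1:
  fixes g :: "'a::euclidean_space \<Rightarrow> ereal" and zb lb :: 'a
  assumes "polyhedral_fun g"
    and "(zb, lb) \<in> gph_subdiff g"
  shows "\<forall>w. strict_second_subderiv g zb lb w =
    indicator_fun {a - b | a b. a \<in> critical_cone g zb lb \<and> b \<in> critical_cone g zb lb} w"
proof -
  obtain C D U gz where "polyhedral_local_model g zb lb C D U gz"
    using polyhedral_local_model_exists[OF assms] .
  then interpret polyhedral_local_model g zb lb C D U gz .
  let ?K = "polar_cone (C \<union> D)"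
  have "strict_second_subderiv g zb lb w = indicator_fun {a - b | a b. a \<in> ?K \<and> b \<in> ?K} w" for w
  proof (cases "w \<in> {a - b | a b. a \<in> ?K \<and> b \<in> ?K}")
    case True
    then obtain w1 w2 where "w = w1 - w2" "w1 \<in> ?K" "w2 \<in> ?K"
      by blast
    then have "strict_second_subderiv g zb lb w = 0"
      using strict_second_subderiv_diff_critical_le strict_second_subderiv_nonneg by (metis antisym)
    then show ?thesis
      using True unfolding indicator_fun_def by simp
  next
    case False
    then show ?thesis
      using strict_second_subderiv_eq_PInf unfolding indicator_fun_def by simp
  qed
  then show ?thesis
    unfolding critical_cone_eq by blast
qed

end
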